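(* For integers $t,n$, if $n<-|t-3|$ then $M_{t,n}=0$.
   Context: Let $\mathbb{N}$ be the positive integers. $M'_{t,n}$ is the cardinality of the union of the two sets $A=\{(u,v,w,k)\in\mathbb{N}^3\times\{0,1\}: u\neq w,\ v\geq 2,\ n=u+w-v-1+6k,\ (-1)^kt=2+(u+w)(1+v)+uvw\}$ and $B=\{(u,v,w,k)\in\mathbb{N}^3\times\{1,2\}: u,v,w \text{ distinct},\ n=u+v+w-3+6k,\ (-1)^kt=1+u+v+w+u(1+v)+v(1+w)+w(1+u)+(1+u)(1+v)(1+w)\}$. Define $M_{t,n}=M'_{t,n}+1$ if $t\notin\{1,3\}$ and $n\in\{t-3,-(t-3)\}$; also $M_{t,n}=M'_{t,n}+1$ if $t=1$ and $n=\pm2$, or if $t=3$ and $n=0$; and $M_{t,n}=M'_{t,n}$ otherwise. *)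

theory Defs
  imports Main
begin

definition Aset :: "int \<Rightarrow> int \<Rightarrow> (int \<times> int \<times> int \<times> int) set" where
  "Aset t n = {(u,v,w,k). u \<ge> 1 \<and> v \<ge> 1 \<and> w \<ge> 1 \<and> k \<in> {0,1} \<and>
      u \<noteq> w \<and> v \<ge> 2 \<and> n = u + w - v - 1 + 6*k \<and>
      (-1::int)^(nat k) * t = 2 + (u+w)*(1+v) + u*v*w}"

definition Bset :: "int \<Rightarrow> int \<Rightarrow> (int \<times> int \<times> int \<times> int) set" where
  "Bset t n = {(u,v,w,k). u \<ge> 1 \<and> v \<ge> 1 \<and> w \<ge> 1 \<and> k \<in> {1,2} \<and>
      u \<noteq> v \<and> v \<noteq> w \<and> u \<noteq> w \<and> n = u + v + w - 3 + 6*k \<and>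
      (-1::int)^(nat k) * t = 1 + u + v + w + u*(1+v) + v*(1+w) + w*(1+u)
                              + (1+u)*(1+v)*(1+w)}"

definition Mprime :: "int \<Rightarrow> int \<Rightarrow> nat" where
  "Mprime t n = card (Aset t n \<union> Bset t n)"

definition M :: "int \<Rightarrow> int \<Rightarrow> nat" where
  "M t n = (if (t \<notin> {1,3} \<and> n \<in> {t-3, -(t-3)}) \<or> (t = 1 \<and> n \<in> {2,-2}) \<or> (t = 3 \<and> n = 0)
            then Mprime t n + 1 else Mprime t n)"

end

theory Submission
  imports Defs
begin

text \<open>A tuple of \<open>B\<close> forces \<open>n > 0\<close>. For a tuple of \<open>A\<close> the right-hand side
  \<open>2 + (u+w)(1+v) + uvw\<close> is \<open>\<bar>t\<bar>\<close> and is at least \<open>3v + 4\<close>, which outweighs the only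
  negative contribution \<open>-v\<close> to \<open>n\<close>; so both sets are empty below \<open>-\<bar>t-3\<bar>\<close>.
  The correction term of \<open>M\<close> sits at \<open>n = \<plusminus>(t-3)\<close>, never below \<open>-\<bar>t-3\<bar>\<close>.\<close>

lemma Aset_memberD_ge:
  assumes "x \<in> Aset t n"
  shows "- \<bar>t - 3\<bar> \<le> n"
proof -
  obtain u v w k where x: "x = (u, v, w, k)" by (cases x) auto
  with assms have u: "u \<ge> 1" and v: "v \<ge> 1" and w: "w \<ge> 1" and k: "k \<in> {0, 1}"
    and n: "n = u + w - v - 1 + 6 * k"
    and t: "(-1::int) ^ nat k * t = 2 + (u + w) * (1 + v) + u * v * w"
    unfolding Aset_def by auto
  have "v \<le> u * v" using u v by simp
  also have "\<dots> \<le> u * v * w" using u v w by simp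
  finally have uvw: "v \<le> u * v * w" .
  have "2 * (1 + v) \<le> (u + w) * (1 + v)"
    using u v w by (intro mult_right_mono) auto
  then have uw: "2 + 2 * v \<le> (u + w) * (1 + v)"
    by simp
  have "3 * v + 4 \<le> (-1::int) ^ nat k * t"
    unfolding t using uvw uw by linarith
  also have "\<dots> \<le> \<bar>t\<bar>"
    using abs_ge_self[of "(-1::int) ^ nat k * t"] by (simp add: abs_mult)
  finally have "3 * v + 1 \<le> \<bar>t - 3\<bar>"
    by arith
  moreover have "1 - v \<le> n"
    using n u w k by auto
  ultimately show ?thesis by linarith
qed

lemma Bset_memberD_pos:
  assumes "x \<in> Bset t n"
  shows "0 < n"
  using assms unfolding Bset_def by auto

lemma Mprime_eq_0_if_less:
  assumes "n < - \<bar>t - 3\<bar>"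
  shows "Mprime t n = 0"
proof -
  have "Aset t n = {}"
    using assms Aset_memberD_ge by (meson ex_in_conv leD)
  moreover have "Bset t n = {}"
    using assms Bset_memberD_pos by (smt (verit) ex_in_conv)
  ultimately show ?thesis
    unfolding Mprime_def by simp
qed

lemma M_eq_Mprime_if_less:
  assumes "n < - \<bar>t - 3\<bar>"
  shows "M t n = Mprime t n"
  using assms unfolding M_def by auto

theorem proposition4p2:
  fixes t n :: int
  assumes "n < - \<bar>t - 3\<bar>"
  shows "M t n = 0"
  using assms by (simp add: M_eq_Mprime_if_less Mprime_eq_0_if_less)

end
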